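(* Let $n$ be a nonnegative integer and let $x$ be a complex number such that no denominator below vanishes. Then \[ \sum_{k=0}^{2n}(-1)^k\binom{2n}{k}\frac{\binom{x+k}{k}^2}{\binom{x+2n}{k}^2}H_{k}^{\langle2\rangle}(x) =\frac{1}{2}\frac{\binom{x+n}{n}^2\binom{1+2x+2n}{2n}}{\binom{x+2n}{2n}^2\binom{1+2x+n}{n}}H_{n}^{\langle2\rangle}(x). \]
   Context: For complex $z$ and a nonnegative integer $k$, $\binom{z}{k}=\frac{z(z-1)\cdots(z-k+1)}{k!}$ (with $\binom{z}{0}=1$). For complex $x$ and nonnegative integer $m$, $H_0^{\langle 2\rangle}(x)=0$ and $H_m^{\langle 2\rangle}(x)=\sum_{j=1}^m\frac{1}{(x+j)^2}$ for $m\ge1$. The parameter $x$ is assumed to be such that all denominators are nonzero. *)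

theory Defs
  imports "HOL-Analysis.Analysis"
begin

definition H2 :: "nat \<Rightarrow> complex \<Rightarrow> complex" where
  "H2 m x = (\<Sum>j=1..m. 1 / (x + of_nat j)^2)"

end

theory Submission
  imports Defs
begin

text \<open>
  Dixon's identity
    sum_k (-1)^k C(2n,k) (y+1)_k (y+1)_(2n-k) (z+1)_k (z+1)_(2n-k) = (2n)!/n! (y+1)_n (z+1)_n (y+z+n+2)_n
  is proved by the Wilf-Zeilberger method. For y = x + e and z = x - e one has
  (y+1)_m (z+1)_m = Q_m(e^2) with Q_m(t) = prod_(i<m) ((x+i+1)^2 - t), so Dixon's identity becomes an
  identity between polynomials in t. Since Q_m'(0) = -Q_m(0) H_m^(2)(x), differentiating it at t = 0
  produces two weighted sums of H^(2) which coincide under k -> 2n - k; rewriting the binomials as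
  Pochhammer symbols gives the theorem.
\<close>

lemma binomial_Suc_Suc_top:
  "(m+1)*(m+2) * (k+m+2 choose k) = (k+m+1)*(k+m+2) * (k+m choose k)"
proof -
  have "(m+2) * (k+m+2 choose k) = (k+m+2) * (k+m+1 choose k)"
    using binomial_absorb_comp[of "k+m+2" k] by (simp add: numeral_2_eq_2)
  moreover have "(m+1) * (k+m+1 choose k) = (k+m+1) * (k+m choose k)"
    using binomial_absorb_comp[of "k+m+1" k] by simp
  ultimately show ?thesis by (metis mult.assoc mult.left_commute)
qed

lemma binomial_Suc_Suc_top_Suc:
  "(k+1)*(m+1) * (k+m+2 choose Suc k) = (k+m+1)*(k+m+2) * (k+m choose k)"
  by (metis Suc_eq_plus1 Suc_times_binomial_add Suc_times_binomial_eq
    add_2_eq_Suc' mult.commute mult.left_commute)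

lemma of_nat_binomial_Suc_Suc_top:
  "(of_nat m + 1) * (of_nat m + 2) * (of_nat (k+m+2 choose k) :: 'a::comm_semiring_1)
   = (of_nat (k+m) + 1) * (of_nat (k+m) + 2) * of_nat (k+m choose k)"
  using arg_cong[OF binomial_Suc_Suc_top[of m k], of "of_nat :: nat \<Rightarrow> 'a"]
  by (simp only: of_nat_mult of_nat_add of_nat_1 of_nat_numeral)

lemma of_nat_binomial_Suc_Suc_top_Suc:
  "(of_nat k + 1) * (of_nat m + 1) * (of_nat (k+m+2 choose Suc k) :: 'a::comm_semiring_1)
   = (of_nat (k+m) + 1) * (of_nat (k+m) + 2) * of_nat (k+m choose k)"
  using arg_cong[OF binomial_Suc_Suc_top_Suc[of k m], of "of_nat :: nat \<Rightarrow> 'a"]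
  by (simp only: of_nat_mult of_nat_add of_nat_1 of_nat_numeral)

lemma of_nat_double_plus_2_nonzero: "2 * of_nat n + 2 \<noteq> (0::'a::field_char_0)"
proof -
  have "(2 * of_nat n + 2::'a) = of_nat (2*n+2)" by simp
  also have "\<dots> \<noteq> 0" by (simp only: of_nat_eq_0_iff)
  finally show ?thesis .
qed

lemma pochhammer_shift_Suc:
  "pochhammer (y+1) (Suc k) = pochhammer (y+1) k * (y + of_nat k + 1)"
  by (simp add: pochhammer_Suc algebra_simps)

definition dixon_summand :: "'a::field_char_0 \<Rightarrow> 'a \<Rightarrow> nat \<Rightarrow> nat \<Rightarrow> 'a" where
  "dixon_summand y z n k = (-1)^k * of_nat (2*n choose k)
     * pochhammer (y+1) k * pochhammer (y+1) (2*n-k) * pochhammer (z+1) k * pochhammer (z+1) (2*n-k)"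

text \<open>
  The certificate polynomial below was found by Zeilberger's algorithm: with F = dixon_summand and
  G = dixon_cert, the pair satisfies (y+z+n+2) F(n+1,k) - dixon_rec_coeff * F(n,k) = G(n,k+1) - G(n,k).
\<close>

definition dixon_cert_poly :: "'a::field_char_0 \<Rightarrow> 'a \<Rightarrow> 'a \<Rightarrow> 'a \<Rightarrow> 'a" where
  "dixon_cert_poly n k y z = (n+1)*k^2 - (n+1)*(6*n+2*y+2*z+7)*k
     + (10+4*z+4*y-2*y*z-y*z^2-y^2*z+28*n+8*n*z+8*n*y-n*y*z+26*n^2+4*n^2*z+4*n^2*y+8*n^3)"

definition dixon_cert :: "'a::field_char_0 \<Rightarrow> 'a \<Rightarrow> nat \<Rightarrow> nat \<Rightarrow> 'a" where
  "dixon_cert y z n k = (-1)^k * (of_nat (2*n+2 choose k) / (2 * of_nat n + 2)) * of_nat k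
     * dixon_cert_poly (of_nat n) (of_nat k) y z
     * pochhammer (y+1) k * pochhammer (y+1) (2*n+1-k) * pochhammer (z+1) k * pochhammer (z+1) (2*n+1-k)"

definition dixon_rec_coeff :: "'a::field_char_0 \<Rightarrow> 'a \<Rightarrow> nat \<Rightarrow> 'a" where
  "dixon_rec_coeff y z n = 2 * (2 * of_nat n + 1) * (y + of_nat n + 1) * (z + of_nat n + 1)
     * (y + z + 2 * of_nat n + 2) * (y + z + 2 * of_nat n + 3)"

lemma dixon_summand_Suc:
  fixes y z :: "'a::field_char_0"
  assumes "2*n = k + m"
  shows "(of_nat m + 1) * (of_nat m + 2) * dixon_summand y z (Suc n) k
       = (2 * of_nat n + 1) * (2 * of_nat n + 2) * (y + of_nat m + 1) * (y + of_nat m + 2)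
         * (z + of_nat m + 1) * (z + of_nat m + 2) * dixon_summand y z n k"
proof -
  have binom: "(of_nat m + 1) * (of_nat m + 2) * (of_nat (2*n+2 choose k) :: 'a)
         = (2 * of_nat n + 1) * (2 * of_nat n + 2) * of_nat (2*n choose k)"
    using of_nat_binomial_Suc_Suc_top[of m k, where 'a='a] unfolding assms[symmetric] by simp
  have idx: "2 * Suc n = 2*n+2" "2*n+2 - k = Suc (Suc m)" "2*n - k = m" using assms by simp_all
  define R where "R = (-1)^k * pochhammer (y+1) k * pochhammer (y+1) m * pochhammer (z+1) k * pochhammer (z+1) m
    * (y + of_nat m + 1) * (y + of_nat m + 2) * (z + of_nat m + 1) * (z + of_nat m + 2)"
  have "(of_nat m + 1) * (of_nat m + 2) * dixon_summand y z (Suc n) k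
      = ((of_nat m + 1) * (of_nat m + 2) * of_nat (2*n+2 choose k)) * R"
    unfolding dixon_summand_def idx pochhammer_shift_Suc of_nat_Suc R_def by algebra
  also have "\<dots> = ((2 * of_nat n + 1) * (2 * of_nat n + 2) * of_nat (2*n choose k)) * R"
    unfolding binom ..
  also have "\<dots> = (2 * of_nat n + 1) * (2 * of_nat n + 2) * (y + of_nat m + 1) * (y + of_nat m + 2)
         * (z + of_nat m + 1) * (z + of_nat m + 2) * dixon_summand y z n k"
    unfolding dixon_summand_def idx R_def by algebra
  finally show ?thesis .
qed

lemma dixon_cert_eq:
  fixes y z :: "'a::field_char_0"
  assumes "2*n = k + m"
  shows "(of_nat m + 1) * (of_nat m + 2) * dixon_cert y z n k
       = (2 * of_nat n + 1) * of_nat k * dixon_cert_poly (of_nat n) (of_nat k) y z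
         * (y + of_nat m + 1) * (z + of_nat m + 1) * dixon_summand y z n k"
proof -
  have "(of_nat m + 1) * (of_nat m + 2) * (of_nat (2*n+2 choose k) :: 'a)
         = (2 * of_nat n + 1) * of_nat (2*n choose k) * (2 * of_nat n + 2)"
    using of_nat_binomial_Suc_Suc_top[of m k, where 'a='a] unfolding assms[symmetric] by simp
  then have binom: "(of_nat m + 1) * (of_nat m + 2) * (of_nat (2*n+2 choose k) / (2 * of_nat n + 2) :: 'a)
         = (2 * of_nat n + 1) * of_nat (2*n choose k)"
    by (simp only: times_divide_eq_right nonzero_mult_div_cancel_right[OF of_nat_double_plus_2_nonzero])
  have idx: "2*n+1 - k = Suc m" "2*n - k = m" using assms by simp_all
  define R where "R = (-1)^k * of_nat k * dixon_cert_poly (of_nat n) (of_nat k) y z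
    * pochhammer (y+1) k * pochhammer (y+1) m * pochhammer (z+1) k * pochhammer (z+1) m
    * (y + of_nat m + 1) * (z + of_nat m + 1)"
  have "(of_nat m + 1) * (of_nat m + 2) * dixon_cert y z n k
      = ((of_nat m + 1) * (of_nat m + 2) * (of_nat (2*n+2 choose k) / (2 * of_nat n + 2))) * R"
    unfolding dixon_cert_def idx pochhammer_shift_Suc R_def by algebra
  also have "\<dots> = (2 * of_nat n + 1) * of_nat (2*n choose k) * R"
    unfolding binom ..
  also have "\<dots> = (2 * of_nat n + 1) * of_nat k * dixon_cert_poly (of_nat n) (of_nat k) y z
         * (y + of_nat m + 1) * (z + of_nat m + 1) * dixon_summand y z n k"
    unfolding dixon_summand_def idx R_def by algebra
  finally show ?thesis .
qed

lemma dixon_cert_Suc_eq: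
  fixes y z :: "'a::field_char_0"
  assumes "2*n = k + m"
  shows "(of_nat m + 1) * dixon_cert y z n (Suc k)
       = - (2 * of_nat n + 1) * dixon_cert_poly (of_nat n) (of_nat k + 1) y z
         * (y + of_nat k + 1) * (z + of_nat k + 1) * dixon_summand y z n k"
proof -
  have "(of_nat k + 1) * (of_nat m + 1) * (of_nat (2*n+2 choose Suc k) :: 'a)
         = (2 * of_nat n + 1) * of_nat (2*n choose k) * (2 * of_nat n + 2)"
    using of_nat_binomial_Suc_Suc_top_Suc[of k m, where 'a='a] unfolding assms[symmetric] by simp
  then have binom: "(of_nat k + 1) * (of_nat m + 1) * (of_nat (2*n+2 choose Suc k) / (2 * of_nat n + 2) :: 'a)
         = (2 * of_nat n + 1) * of_nat (2*n choose k)"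
    by (simp only: times_divide_eq_right nonzero_mult_div_cancel_right[OF of_nat_double_plus_2_nonzero])
  have idx: "2*n+1 - Suc k = m" "2*n - k = m" "of_nat (Suc k) = (of_nat k + 1 :: 'a)" using assms by simp_all
  define R where "R = (-1)^Suc k * dixon_cert_poly (of_nat n) (of_nat k + 1) y z
    * pochhammer (y+1) k * pochhammer (y+1) m * pochhammer (z+1) k * pochhammer (z+1) m
    * (y + of_nat k + 1) * (z + of_nat k + 1)"
  have "(of_nat m + 1) * dixon_cert y z n (Suc k)
      = ((of_nat k + 1) * (of_nat m + 1) * (of_nat (2*n+2 choose Suc k) / (2 * of_nat n + 2))) * R"
    unfolding dixon_cert_def idx pochhammer_shift_Suc R_def by algebra
  also have "\<dots> = (2 * of_nat n + 1) * of_nat (2*n choose k) * R"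
    unfolding binom ..
  also have "\<dots> = - (2 * of_nat n + 1) * dixon_cert_poly (of_nat n) (of_nat k + 1) y z
         * (y + of_nat k + 1) * (z + of_nat k + 1) * dixon_summand y z n k"
    unfolding dixon_summand_def idx R_def power_Suc by algebra
  finally show ?thesis .
qed

lemma dixon_cert_poly_identity:
  fixes y z :: "'a::field_char_0"
  assumes "2*n = k + m"
  shows "(y + z + of_nat n + 2) * (2 * of_nat n + 1) * (2 * of_nat n + 2)
           * (y + of_nat m + 1) * (y + of_nat m + 2) * (z + of_nat m + 1) * (z + of_nat m + 2)
         - dixon_rec_coeff y z n * (of_nat m + 1) * (of_nat m + 2)
       = - (2 * of_nat n + 1) * (of_nat m + 2) * dixon_cert_poly (of_nat n) (of_nat k + 1) y z
           * (y + of_nat k + 1) * (z + of_nat k + 1)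
         - (2 * of_nat n + 1) * of_nat k * dixon_cert_poly (of_nat n) (of_nat k) y z
           * (y + of_nat m + 1) * (z + of_nat m + 1)"
proof -
  have "of_nat m = 2 * of_nat n - (of_nat k :: 'a)"
    using arg_cong[OF assms, of "of_nat :: nat \<Rightarrow> 'a"] by simp
  then show ?thesis unfolding dixon_rec_coeff_def dixon_cert_poly_def by algebra
qed

lemma dixon_wz_step:
  fixes y z :: "'a::field_char_0"
  assumes "k \<le> 2*n"
  shows "(y + z + of_nat n + 2) * dixon_summand y z (Suc n) k - dixon_rec_coeff y z n * dixon_summand y z n k
       = dixon_cert y z n (Suc k) - dixon_cert y z n k"
proof -
  obtain m where m: "2*n = k + m" using assms le_Suc_ex by blast
  define D :: 'a where "D = (of_nat m + 1) * (of_nat m + 2)"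
  have "D = of_nat ((m+1)*(m+2))" unfolding D_def by (simp add: algebra_simps)
  then have "D \<noteq> 0" by (simp only: of_nat_eq_0_iff) simp
  moreover have "D * ((y + z + of_nat n + 2) * dixon_summand y z (Suc n) k - dixon_rec_coeff y z n * dixon_summand y z n k)
      = D * (dixon_cert y z n (Suc k) - dixon_cert y z n k)"
  proof -
    have "D * ((y + z + of_nat n + 2) * dixon_summand y z (Suc n) k - dixon_rec_coeff y z n * dixon_summand y z n k)
        = (y + z + of_nat n + 2) * (D * dixon_summand y z (Suc n) k) - dixon_rec_coeff y z n * D * dixon_summand y z n k"
      by algebra
    also have "\<dots> = ((y + z + of_nat n + 2) * (2 * of_nat n + 1) * (2 * of_nat n + 2)
           * (y + of_nat m + 1) * (y + of_nat m + 2) * (z + of_nat m + 1) * (z + of_nat m + 2)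
         - dixon_rec_coeff y z n * (of_nat m + 1) * (of_nat m + 2)) * dixon_summand y z n k"
      unfolding D_def dixon_summand_Suc[OF m] by algebra
    also have "\<dots> = (of_nat m + 2) * ((of_nat m + 1) * dixon_cert y z n (Suc k)) - D * dixon_cert y z n k"
      unfolding dixon_cert_poly_identity[OF m] D_def dixon_cert_eq[OF m] dixon_cert_Suc_eq[OF m] by algebra
    also have "\<dots> = D * (dixon_cert y z n (Suc k) - dixon_cert y z n k)"
      unfolding D_def by algebra
    finally show ?thesis .
  qed
  ultimately show ?thesis by simp
qed

lemma dixon_wz_boundary:
  fixes y z :: "'a::field_char_0"
  shows "dixon_cert y z n (2*n+1) + (y + z + of_nat n + 2)
           * (dixon_summand y z (Suc n) (2*n+1) + dixon_summand y z (Suc n) (2*n+2)) = 0"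
proof -
  define Q where "Q = pochhammer (y+1) (2*n+1) * pochhammer (z+1) (2*n+1)"
  have idx: "2 * Suc n = 2*n+2" "2*n+2 - (2*n+1) = 1" "2*n+1 - (2*n+1) = 0" "2*n+2 - (2*n+2) = 0"
    "2*n+2 = Suc (2*n+1)" by simp_all
  have cert: "dixon_cert y z n (2*n+1) = - of_nat (2*n+1) * dixon_cert_poly (of_nat n) (of_nat (2*n+1)) y z * Q"
  proof -
    have "(of_nat (2*n+2 choose (2*n+1)) :: 'a) = 2 * of_nat n + 2" by simp
    then have unit: "(of_nat (2*n+2 choose (2*n+1)) :: 'a) / (2 * of_nat n + 2) = 1"
      using of_nat_double_plus_2_nonzero by simp
    show ?thesis unfolding dixon_cert_def Q_def idx(3) unit by simp
  qed
  have odd: "of_nat (2*n+1) = (2 * of_nat n + 1 :: 'a)" by simp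
  have last2: "dixon_summand y z (Suc n) (2*n+1) = - (2 * of_nat n + 2) * (y + 1) * (z + 1) * Q"
    unfolding dixon_summand_def Q_def idx(1,2) by (simp add: algebra_simps)
  have last1: "dixon_summand y z (Suc n) (2*n+2) = (y + 2 * of_nat n + 2) * (z + 2 * of_nat n + 2) * Q"
    unfolding dixon_summand_def Q_def idx(1,4) idx(5) pochhammer_shift_Suc by (simp add: algebra_simps)
  show ?thesis unfolding cert last1 last2 odd dixon_cert_poly_def by algebra
qed

definition dixon_sum :: "'a::field_char_0 \<Rightarrow> 'a \<Rightarrow> nat \<Rightarrow> 'a" where
  "dixon_sum y z n = (\<Sum>k=0..2*n. dixon_summand y z n k)"

lemma dixon_sum_rec:
  fixes y z :: "'a::field_char_0"
  shows "(y + z + of_nat n + 2) * dixon_sum y z (Suc n) = dixon_rec_coeff y z n * dixon_sum y z n"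
proof -
  define w where "w = y + z + of_nat n + 2"
  have telescope: "(\<Sum>k=0..2*n. w * dixon_summand y z (Suc n) k - dixon_rec_coeff y z n * dixon_summand y z n k)
      = dixon_cert y z n (2*n+1)"
  proof -
    have "(\<Sum>k=0..2*n. w * dixon_summand y z (Suc n) k - dixon_rec_coeff y z n * dixon_summand y z n k)
        = (\<Sum>k=0..2*n. dixon_cert y z n (Suc k) - dixon_cert y z n k)"
      unfolding w_def by (intro sum.cong refl dixon_wz_step) simp
    also have "\<dots> = dixon_cert y z n (Suc (2*n)) - dixon_cert y z n 0" by (rule sum_Suc_diff) simp
    finally show ?thesis by (simp add: dixon_cert_def)
  qed
  have split: "dixon_sum y z (Suc n) = (\<Sum>k=0..2*n. dixon_summand y z (Suc n) k)
      + dixon_summand y z (Suc n) (2*n+1) + dixon_summand y z (Suc n) (2*n+2)"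
    unfolding dixon_sum_def by (simp add: numeral_2_eq_2)
  have "w * dixon_sum y z (Suc n) - dixon_rec_coeff y z n * dixon_sum y z n
      = dixon_cert y z n (2*n+1) + w * (dixon_summand y z (Suc n) (2*n+1) + dixon_summand y z (Suc n) (2*n+2))"
    unfolding split telescope[symmetric] dixon_sum_def
    by (simp add: sum_subtractf sum_distrib_left algebra_simps)
  also have "\<dots> = 0" unfolding w_def by (rule dixon_wz_boundary)
  finally show ?thesis unfolding w_def by simp
qed

lemma dixon_sum_closed_form:
  fixes y z :: "'a::field_char_0"
  assumes "\<forall>j<n. y + z + of_nat j + 2 \<noteq> 0"
  shows "dixon_sum y z n
       = fact (2*n) / fact n * pochhammer (y+1) n * pochhammer (z+1) n * pochhammer (y + z + of_nat n + 2) n"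
  using assms
proof (induction n)
  case 0
  then show ?case unfolding dixon_sum_def dixon_summand_def by simp
next
  case (Suc n)
  define w where "w = y + z + of_nat n + 2"
  define f :: 'a where "f = fact (2*n) / fact n"
  have "w \<noteq> 0" using Suc.prems unfolding w_def by auto
  have fact_Suc_double: "fact (2 * Suc n) = 2 * (2 * of_nat n + 1) * f * (fact (Suc n) :: 'a)"
    unfolding f_def by (simp add: field_simps)
  have fact_ratio: "fact (2 * Suc n) / fact (Suc n) = 2 * (2 * of_nat n + 1) * f"
    unfolding fact_Suc_double by (rule nonzero_mult_div_cancel_right[OF fact_nonzero])
  have poch: "pochhammer (w+1) (Suc n) * w = pochhammer w n * (w + of_nat n) * (w + of_nat n + 1)"
    using pochhammer_rec[of w "Suc n"] pochhammer_Suc[of w "Suc n"] pochhammer_Suc[of w n]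
    by (simp add: algebra_simps)
  have shift: "y + z + of_nat (Suc n) + 2 = w + 1" unfolding w_def by simp
  have "w * (fact (2 * Suc n) / fact (Suc n) * pochhammer (y+1) (Suc n) * pochhammer (z+1) (Suc n)
          * pochhammer (y + z + of_nat (Suc n) + 2) (Suc n))
      = 2 * (2 * of_nat n + 1) * f * pochhammer (y+1) n * (y + of_nat n + 1)
          * pochhammer (z+1) n * (z + of_nat n + 1) * (pochhammer (w+1) (Suc n) * w)"
    unfolding fact_ratio shift pochhammer_shift_Suc by algebra
  also have "\<dots> = dixon_rec_coeff y z n * (f * pochhammer (y+1) n * pochhammer (z+1) n * pochhammer w n)"
    unfolding poch unfolding dixon_rec_coeff_def w_def by algebra
  also have "\<dots> = dixon_rec_coeff y z n * dixon_sum y z n"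
    using Suc unfolding f_def w_def by simp
  also have "\<dots> = w * dixon_sum y z (Suc n)"
    unfolding w_def by (rule dixon_sum_rec[symmetric])
  finally show ?case using \<open>w \<noteq> 0\<close> by (metis mult_left_cancel)
qed

definition square_shift_prod :: "'a::comm_ring_1 \<Rightarrow> nat \<Rightarrow> 'a \<Rightarrow> 'a" where
  "square_shift_prod x m t = (\<Prod>i<m. (x + of_nat i + 1)^2 - t)"

lemma pochhammer_plus_minus:
  "pochhammer (x + e + 1) m * pochhammer (x - e + 1) m = square_shift_prod x m (e^2)"
  unfolding square_shift_prod_def pochhammer_prod atLeast0LessThan prod.distrib[symmetric]
  by (rule prod.cong) (simp_all add: power2_eq_square algebra_simps)

lemma square_shift_prod_0: "square_shift_prod x m 0 = pochhammer (x+1) m ^ 2"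
  using pochhammer_plus_minus[of x 0 m] by (simp add: power2_eq_square)

lemma dixon_square_shift_prod:
  fixes x t :: complex
  assumes "\<forall>j<n. 2*x + of_nat j + 2 \<noteq> 0"
  shows "(\<Sum>k=0..2*n. (-1)^k * of_nat (2*n choose k) * (square_shift_prod x k t * square_shift_prod x (2*n-k) t))
       = fact (2*n) / fact n * pochhammer (2*x + of_nat n + 2) n * square_shift_prod x n t"
proof -
  obtain e where t: "t = e^2" using power2_csqrt by metis
  have "\<forall>j<n. (x+e) + (x-e) + of_nat j + 2 \<noteq> 0" using assms by simp
  from dixon_sum_closed_form[OF this] show ?thesis
    unfolding dixon_sum_def dixon_summand_def t pochhammer_plus_minus[symmetric]
    by (simp add: mult_ac)
qed

lemma square_shift_prod_has_derivative:
  assumes "\<And>j. 1 \<le> j \<Longrightarrow> j \<le> m \<Longrightarrow> x + of_nat j \<noteq> 0"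
  shows "(square_shift_prod x m has_field_derivative - square_shift_prod x m 0 * H2 m x) (at 0)"
  using assms
proof (induction m)
  case 0
  then show ?case unfolding square_shift_prod_def H2_def by simp
next
  case (Suc m)
  define a where "a = (x + of_nat m + 1)^2"
  have "a \<noteq> 0" using Suc.prems[of "Suc m"] unfolding a_def by (simp add: add_ac)
  have Q: "square_shift_prod x (Suc m) = (\<lambda>t. square_shift_prod x m t * (a - t))"
    unfolding square_shift_prod_def a_def by (simp add: fun_eq_iff)
  have H: "H2 (Suc m) x = H2 m x + 1/a"
    unfolding H2_def a_def by (simp add: add_ac)
  have "((\<lambda>t. square_shift_prod x m t * (a - t)) has_field_derivative
      - square_shift_prod x m 0 * H2 m x * (a - 0) + (0 - 1) * square_shift_prod x m 0) (at 0)"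
    using Suc by (intro DERIV_mult DERIV_diff DERIV_const DERIV_ident) auto
  then show ?case unfolding Q
    by (rule DERIV_cong) (use \<open>a \<noteq> 0\<close> in \<open>simp add: H field_simps\<close>)
qed

lemma sum_reflect_symmetric_weights:
  fixes T h :: "nat \<Rightarrow> 'a::comm_semiring_1"
  assumes "\<And>k. k \<le> m \<Longrightarrow> T (m - k) = T k"
  shows "(\<Sum>k=0..m. T k * h (m - k)) = (\<Sum>k=0..m. T k * h k)"
proof -
  have "(\<Sum>k=0..m. T k * h k) = (\<Sum>k=0..m. T (m - k) * h (m - k))"
    using sum.atLeastAtMost_rev[of "\<lambda>k. T k * h k" 0 m] by simp
  also have "\<dots> = (\<Sum>k=0..m. T k * h (m - k))"
    using assms by (intro sum.cong) auto
  finally show ?thesis ..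
qed

lemma alternating_binomial_reflect:
  assumes "k \<le> 2*n"
  shows "(-1)^(2*n-k) * of_nat (2*n choose (2*n-k)) = ((-1)^k * of_nat (2*n choose k) :: 'a::comm_ring_1)"
proof -
  have "(-1::'a)^(2*n-k) = (-1)^k"
    using assms by (simp add: minus_one_power_iff)
  then show ?thesis using binomial_symmetric[OF assms] by simp
qed

lemma dixon_H2_sum:
  fixes x :: complex
  assumes hx: "\<And>j. 1 \<le> j \<Longrightarrow> j \<le> 2*n \<Longrightarrow> x + of_nat j \<noteq> 0"
    and h2x: "\<forall>j<n. 2*x + of_nat j + 2 \<noteq> 0"
  shows "(\<Sum>k=0..2*n. (-1)^k * of_nat (2*n choose k)
            * pochhammer (x+1) k ^ 2 * pochhammer (x+1) (2*n-k) ^ 2 * H2 k x)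
       = fact (2*n) / fact n * pochhammer (2*x + of_nat n + 2) n * pochhammer (x+1) n ^ 2 * H2 n x / 2"
proof -
  let ?Q = "square_shift_prod x"
  define K where "K = fact (2*n) / fact n * pochhammer (2*x + of_nat n + 2) n"
  define c where "c k = ((-1)^k * of_nat (2*n choose k) :: complex)" for k
  define T where "T k = c k * ?Q k 0 * ?Q (2*n-k) 0" for k
  have deriv: "\<And>m. m \<le> 2*n \<Longrightarrow> (?Q m has_field_derivative - ?Q m 0 * H2 m x) (at 0)"
    by (rule square_shift_prod_has_derivative) (use hx in auto)
  have dL: "((\<lambda>t. \<Sum>k=0..2*n. c k * (?Q k t * ?Q (2*n-k) t)) has_field_derivative
      (\<Sum>k=0..2*n. c k * (- ?Q k 0 * H2 k x * ?Q (2*n-k) 0 + - ?Q (2*n-k) 0 * H2 (2*n-k) x * ?Q k 0))) (at 0)"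
    by (intro DERIV_sum DERIV_cmult DERIV_mult deriv) auto
  have LR: "(\<lambda>t. \<Sum>k=0..2*n. c k * (?Q k t * ?Q (2*n-k) t)) = (\<lambda>t. K * ?Q n t)"
    unfolding c_def K_def using dixon_square_shift_prod[OF h2x] by (simp add: fun_eq_iff)
  have dR: "((\<lambda>t. K * ?Q n t) has_field_derivative K * (- ?Q n 0 * H2 n x)) (at 0)"
    by (intro DERIV_cmult deriv) simp
  have "- ((\<Sum>k=0..2*n. T k * H2 k x) + (\<Sum>k=0..2*n. T k * H2 (2*n-k) x))
      = (\<Sum>k=0..2*n. c k * (- ?Q k 0 * H2 k x * ?Q (2*n-k) 0 + - ?Q (2*n-k) 0 * H2 (2*n-k) x * ?Q k 0))"
    unfolding T_def sum.distrib[symmetric] sum_negf[symmetric]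
    by (rule sum.cong) (simp_all add: algebra_simps)
  also have "\<dots> = K * (- ?Q n 0 * H2 n x)"
    using DERIV_unique[OF dL dR[folded LR]] .
  finally have halves: "(\<Sum>k=0..2*n. T k * H2 k x) + (\<Sum>k=0..2*n. T k * H2 (2*n-k) x) = K * ?Q n 0 * H2 n x"
    by (simp only: mult_minus_left mult_minus_right neg_equal_iff_equal mult.assoc)
  have "T (2*n-k) = T k" if "k \<le> 2*n" for k
    using alternating_binomial_reflect[OF that, where 'a=complex] that unfolding T_def c_def by (simp add: mult_ac)
  then have "(\<Sum>k=0..2*n. T k * H2 (2*n-k) x) = (\<Sum>k=0..2*n. T k * H2 k x)"
    by (rule sum_reflect_symmetric_weights)
  with halves have "(\<Sum>k=0..2*n. T k * H2 k x) = K * ?Q n 0 * H2 n x / 2"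
    by (simp add: mult.commute)
  then show ?thesis
    unfolding T_def c_def K_def square_shift_prod_0 .
qed

lemma gbinomial_shift_pochhammer:
  "(x + of_nat k) gchoose k = pochhammer (x+1) k / (fact k :: 'a::field_char_0)"
  by (simp add: gbinomial_pochhammer')

lemma pochhammer_mult_gbinomial:
  fixes x :: "'a::field_char_0"
  assumes "k \<le> m"
  shows "pochhammer (x+1) (m-k) * fact k * ((x + of_nat m) gchoose k) = pochhammer (x+1) m"
proof -
  have split: "pochhammer (x+1) m = pochhammer (x+1) (m-k) * pochhammer (x + 1 + of_nat (m-k)) k"
    using pochhammer_product'[of "x+1" "m-k" k] assms by simp
  have shift: "x + of_nat m - of_nat k + 1 = x + 1 + of_nat (m-k)"
    using assms by simp
  show ?thesis unfolding gbinomial_pochhammer' shift split by simp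
qed

lemma pochhammer_shift_nonzero:
  fixes x :: "'a::field_char_0"
  assumes "\<And>j. 1 \<le> j \<Longrightarrow> j \<le> m \<Longrightarrow> x + of_nat j \<noteq> 0"
  shows "pochhammer (x+1) m \<noteq> 0"
proof
  assume "pochhammer (x+1) m = 0"
  then obtain j where "j < m" "x + 1 = - of_nat j" unfolding pochhammer_eq_0_iff by blast
  have "x + of_nat (Suc j) = (x + 1) + of_nat j" by (simp add: add_ac)
  also have "\<dots> = 0" using \<open>x + 1 = - of_nat j\<close> by simp
  finally show False using assms[of "Suc j"] \<open>j < m\<close> by simp
qed

lemma gbinomial_odd_shift_pochhammer:
  "(1 + 2*x + of_nat m) gchoose m = pochhammer (2*x+2) m / (fact m :: 'a::field_char_0)"
  using gbinomial_shift_pochhammer[of "2*x+1" m] by (simp add: add_ac)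

lemma sum_gbinomial_ratio_squares:
  fixes x :: "'a::field_char_0"
  assumes P: "\<And>m. m \<le> N \<Longrightarrow> pochhammer (x+1) m \<noteq> 0"
  shows "(\<Sum>k=0..N. c k * ((x + of_nat k) gchoose k)^2 / ((x + of_nat N) gchoose k)^2 * h k)
       = (\<Sum>k=0..N. c k * pochhammer (x+1) k ^ 2 * pochhammer (x+1) (N-k) ^ 2 * h k) / pochhammer (x+1) N ^ 2"
  unfolding sum_divide_distrib
proof (rule sum.cong)
  fix k assume "k \<in> {0..N}"
  then have k: "k \<le> N" by simp
  have top: "(x + of_nat N) gchoose k = pochhammer (x+1) N / (pochhammer (x+1) (N-k) * fact k)"
    using pochhammer_mult_gbinomial[OF k, of x] P[of "N-k"] by (simp add: field_simps)
  show "c k * ((x + of_nat k) gchoose k)^2 / ((x + of_nat N) gchoose k)^2 * h k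
      = c k * pochhammer (x+1) k ^ 2 * pochhammer (x+1) (N-k) ^ 2 * h k / pochhammer (x+1) N ^ 2"
    unfolding top gbinomial_shift_pochhammer using P[of N] P[of "N-k"] k
    by (simp add: power_divide power_mult_distrib)
qed simp

lemma dixon_H2_rhs_gbinomial:
  fixes x :: "'a::field_char_0"
  assumes "pochhammer (x+1) (2*n) \<noteq> 0" "pochhammer (2*x+2) n \<noteq> 0"
  shows "fact (2*n) / fact n * pochhammer (2*x + of_nat n + 2) n * pochhammer (x+1) n ^ 2 * h / 2
           / pochhammer (x+1) (2*n) ^ 2
       = 1/2 * (((x + of_nat n) gchoose n)^2 * ((1 + 2*x + of_nat (2*n)) gchoose (2*n)))
           / (((x + of_nat (2*n)) gchoose (2*n))^2 * ((1 + 2*x + of_nat n) gchoose n)) * h"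
proof -
  have shift: "2*x + 2 + of_nat n = 2*x + of_nat n + 2" by simp
  have "pochhammer (2*x+2) (2*n) = pochhammer (2*x+2) n * pochhammer (2*x + of_nat n + 2) n"
    using pochhammer_product'[of "2*x+2" n n] unfolding shift mult_2[of n] .
  then show ?thesis
    unfolding gbinomial_odd_shift_pochhammer gbinomial_shift_pochhammer using assms
    by (simp add: field_simps power2_eq_square)
qed

theorem theorem2:
  fixes n :: nat and x :: complex
  assumes hx: "\<And>j. 1 \<le> j \<Longrightarrow> j \<le> 2*n \<Longrightarrow> x + of_nat j \<noteq> 0"
    and hb: "\<And>k. k \<le> 2*n \<Longrightarrow> (x + of_nat (2*n)) gchoose k \<noteq> 0"
    and hc: "(1 + 2*x + of_nat n) gchoose n \<noteq> 0"
  shows "(\<Sum>k=0..2*n. (-1)^k * of_nat (2*n choose k)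
            * ((x + of_nat k) gchoose k)^2 / ((x + of_nat (2*n)) gchoose k)^2 * H2 k x)
       = 1/2 * (((x + of_nat n) gchoose n)^2 * ((1 + 2*x + of_nat (2*n)) gchoose (2*n)))
           / (((x + of_nat (2*n)) gchoose (2*n))^2 * ((1 + 2*x + of_nat n) gchoose n)) * H2 n x"
proof -
  have P: "pochhammer (x+1) m \<noteq> 0" if "m \<le> 2*n" for m
    by (rule pochhammer_shift_nonzero) (use hx that in auto)
  have P2: "pochhammer (2*x+2) n \<noteq> 0"
    using hc unfolding gbinomial_odd_shift_pochhammer by simp
  then have h2x: "\<forall>j<n. 2*x + of_nat j + 2 \<noteq> 0"
    unfolding pochhammer_eq_0_iff by (auto simp: add_ac eq_neg_iff_add_eq_0)
  have "(\<Sum>k=0..2*n. (-1)^k * of_nat (2*n choose k)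
            * ((x + of_nat k) gchoose k)^2 / ((x + of_nat (2*n)) gchoose k)^2 * H2 k x)
      = (\<Sum>k=0..2*n. (-1)^k * of_nat (2*n choose k)
            * pochhammer (x+1) k ^ 2 * pochhammer (x+1) (2*n-k) ^ 2 * H2 k x) / pochhammer (x+1) (2*n) ^ 2"
    by (rule sum_gbinomial_ratio_squares) (rule P)
  also have "\<dots> = fact (2*n) / fact n * pochhammer (2*x + of_nat n + 2) n * pochhammer (x+1) n ^ 2 * H2 n x / 2
      / pochhammer (x+1) (2*n) ^ 2"
    by (simp only: dixon_H2_sum[OF hx h2x])
  also have "\<dots> = 1/2 * (((x + of_nat n) gchoose n)^2 * ((1 + 2*x + of_nat (2*n)) gchoose (2*n)))
           / (((x + of_nat (2*n)) gchoose (2*n))^2 * ((1 + 2*x + of_nat n) gchoose n)) * H2 n x"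
    using P[of "2*n"] P2 by (rule dixon_H2_rhs_gbinomial) simp
  finally show ?thesis .
qed

end
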